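(* Let $\Pi$ be the elliptic curve $u^2=s(s^2+s+7)$, let $$t=\frac12-\frac{(s^9-84s^6-378s^5-1512s^4-5208s^3-7236s^2-8127s-784)\,u}{432\,s(s+1)^2(s^2+s+7)^2},$$ and $$y=\frac12-\frac{(s^{10}+5s^9+24s^8+20s^7-266s^6-2874s^5-14812s^4-40316s^3-85359s^2-100067s-67396)\,u}{16(s+1)(s^2+s+7)(5s^6+63s^5+252s^4+854s^3+1449s^2+1827s+2030)}.$$ Then $y(t)$ is a solution of $\mathrm{P}_{\mathrm{VI}}$ with parameters $(\theta_1,\theta_2,\theta_3,\theta_4)=(4/7,4/7,4/7,1/3)$.
   Context: $\mathrm{P}_{\mathrm{VI}}$ is the equation $$\frac{d^2y}{dt^2}=\frac12\Big(\frac1y+\frac1{y-1}+\frac1{y-t}\Big)\Big(\frac{dy}{dt}\Big)^2-\Big(\frac1t+\frac1{t-1}+\frac1{y-t}\Big)\frac{dy}{dt}+\frac{y(y-1)(y-t)}{t^2(t-1)^2}\Big(\alpha+\beta\frac{t}{y^2}+\gamma\frac{t-1}{(y-1)^2}+\delta\frac{t(t-1)}{(y-t)^2}\Big),$$ with $\alpha=(\theta_4-1)^2/2$, $\beta=-\theta_1^2/2$, $\gamma=\theta_3^2/2$, $\delta=(1-\theta_2^2)/2$. When $y,t$ are given as rational functions of a parameter on a curve, derivatives with respect to $t$ are computed via the chain rule. *)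

theory Defs
  imports "HOL-Complex_Analysis.Complex_Analysis"
begin

text \<open>The Painleve VI right-hand side, with y' and y'' the first and second
  derivatives of y with respect to t.\<close>
definition PVI_params :: "complex \<Rightarrow> complex \<Rightarrow> complex \<Rightarrow> complex \<Rightarrow> complex \<times> complex \<times> complex \<times> complex" where
  "PVI_params th1 th2 th3 th4 = ((th4 - 1)^2 / 2, - (th1^2) / 2, th3^2 / 2, (1 - th2^2) / 2)"

definition PVI_eq :: "complex \<Rightarrow> complex \<Rightarrow> complex \<Rightarrow> complex \<Rightarrow>
    complex \<Rightarrow> complex \<Rightarrow> complex \<Rightarrow> complex \<Rightarrow> bool" where
  "PVI_eq th1 th2 th3 th4 t y y1 y2 \<longleftrightarrow>
     (case PVI_params th1 th2 th3 th4 of (\<alpha>, \<beta>, \<gamma>, \<delta>) \<Rightarrow>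
       y2 = (1/2) * (1/y + 1/(y-1) + 1/(y-t)) * y1^2
            - (1/t + 1/(t-1) + 1/(y-t)) * y1
            + (y*(y-1)*(y-t)) / (t^2*(t-1)^2)
              * (\<alpha> + \<beta>*t/y^2 + \<gamma>*(t-1)/(y-1)^2 + \<delta>*t*(t-1)/(y-t)^2))"

definition on_Pi :: "complex \<Rightarrow> complex \<Rightarrow> bool" where
  "on_Pi s u \<longleftrightarrow> u^2 = s * (s^2 + s + 7)"

definition t_Pi :: "complex \<Rightarrow> complex \<Rightarrow> complex" where
  "t_Pi s u = 1/2 - ((s^9 - 84* s^6 - 378* s^5 - 1512* s^4 - 5208* s^3 - 7236* s^2 - 8127* s - 784) * u)
                   / (432 * s * (s+1)^2 * (s^2+s+7)^2)"

definition y_Pi :: "complex \<Rightarrow> complex \<Rightarrow> complex" where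
  "y_Pi s u = 1/2 - ((s^10 + 5* s^9 + 24* s^8 + 20* s^7 - 266* s^6 - 2874* s^5 - 14812* s^4
                      - 40316* s^3 - 85359* s^2 - 100067* s - 67396) * u)
                   / (16 * (s+1) * (s^2+s+7)
                      * (5* s^6 + 63* s^5 + 252* s^4 + 854* s^3 + 1449* s^2 + 1827* s + 2030))"

end

theory Submission
  imports Defs
begin

(* On the curve u^2 = s(s^2+s+7) both t and y have the form 1/2 - b(s) u.  Since
   2 u u' = (3s^2+2s+7) s', their derivatives along any local parametrisation are u s'
   times rational functions of s; hence y' = dy/dt is a rational function of s alone and
   y'' = dy'/dt is u times one.  For the parameters (4/7, 4/7, 4/7, 1/3) one has
   beta = -gamma, and then every term of Painleve VI, cleared of denominators, is even
   in u.  Replacing u^2 by s(s^2+s+7) turns the equation into an identity between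
   rational functions of s, which after factoring is one polynomial identity. *)

lemma PVI_eq_if_cleared:
  fixes t y y1 y2 :: complex
  assumes params: "PVI_params th1 th2 th3 th4 = (\<alpha>, \<beta>, \<gamma>, \<delta>)"
    and y: "y \<noteq> 0" "y \<noteq> 1" "y \<noteq> t" and t: "t \<noteq> 0" "t \<noteq> 1"
    and cleared: "2 * y * (y - 1) * (y - t) * t^2 * (t - 1)^2 * y2
      = t^2 * (t - 1)^2 * ((y - 1) * (y - t) + y * (y - t) + y * (y - 1)) * y1^2
        - 2 * y * (y - 1) * t * (t - 1) * ((2 * t - 1) * (y - t) + t * (t - 1)) * y1
        + 2 * (\<alpha> * y^2 * (y - 1)^2 * (y - t)^2 + \<beta> * t * (y - 1)^2 * (y - t)^2
               + \<gamma> * (t - 1) * y^2 * (y - t)^2 + \<delta> * t * (t - 1) * y^2 * (y - 1)^2)"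
  shows "PVI_eq th1 th2 th3 th4 t y y1 y2"
proof -
  define A B C where "A = y - 1" and "B = y - t" and "C = t - 1"
  have nz: "A \<noteq> 0" "B \<noteq> 0" "C \<noteq> 0"
    using y t by (simp_all add: A_def B_def C_def)
  have "y2 = (t^2 * C^2 * (A * B + y * B + y * A) * y1^2
        - 2 * y * A * t * C * ((2 * t - 1) * B + t * C) * y1
        + 2 * (\<alpha> * y^2 * A^2 * B^2 + \<beta> * t * A^2 * B^2 + \<gamma> * C * y^2 * B^2
               + \<delta> * t * C * y^2 * A^2))
      / (2 * y * A * B * t^2 * C^2)"
    using cleared y(1) t(1) nz
    unfolding A_def[symmetric] B_def[symmetric] C_def[symmetric] by (simp add: field_simps)
  then show ?thesis
    unfolding PVI_eq_def params prod.case A_def[symmetric] B_def[symmetric] C_def[symmetric]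
    using y(1) t(1) nz by (simp add: field_simps) (use C_def in algebra)
qed

(* With beta = -gamma the beta- and gamma-terms combine into gamma W (y - t)^2, where
   W = (t - 1) y^2 - t (y - 1)^2; this makes every term even in u. *)
lemma PVI_eq_on_double_cover:
  fixes a b c e u p Y T G D W Q L E :: complex
  assumes params: "PVI_params th1 th2 th3 th4 = (\<alpha>, - \<gamma>, \<gamma>, \<delta>)"
    and u: "u^2 = p"
    and y: "1/2 - a * u \<notin> {0, 1, 1/2 - b * u}" and t: "1/2 - b * u \<notin> {0, 1}"
    and Y: "a^2 * p - 1/4 = Y" and T: "b^2 * p - 1/4 = T" and G: "b - a = G"
    and D: "(b - a)^2 * p = D" and W: "2 * a * b * p - a^2 * p - 1/4 = W"
    and Q: "2 * a * (a - b) * p + Y = Q" and L: "2 * b * (a - b) * p + T = L"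
    and E: "e * p = E"
    and cleared: "2 * Y * G * T^2 * E
      = T^2 * Q * c^2 - 2 * Y * T * L * c + 2 * (\<alpha> * Y^2 * D + \<gamma> * W * D + \<delta> * T * Y^2)"
  shows "PVI_eq th1 th2 th3 th4 (1/2 - b * u) (1/2 - a * u) c (e * u)"
proof (rule PVI_eq_if_cleared[OF params])
  show "1/2 - a * u \<noteq> 0" "1/2 - a * u \<noteq> 1" "1/2 - a * u \<noteq> 1/2 - b * u"
    and "1/2 - b * u \<noteq> 0" "1/2 - b * u \<noteq> 1"
    using y t by auto
  have "2 * (a^2 * u^2 - 1/4) * (b - a) * (b^2 * u^2 - 1/4)^2 * (e * u^2)
      = (b^2 * u^2 - 1/4)^2 * (2 * a * (a - b) * u^2 + (a^2 * u^2 - 1/4)) * c^2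
        - 2 * (a^2 * u^2 - 1/4) * (b^2 * u^2 - 1/4) * (2 * b * (a - b) * u^2 + (b^2 * u^2 - 1/4)) * c
        + 2 * (\<alpha> * (a^2 * u^2 - 1/4)^2 * ((b - a)^2 * u^2)
               + \<gamma> * (2 * a * b * u^2 - a^2 * u^2 - 1/4) * ((b - a)^2 * u^2)
               + \<delta> * (b^2 * u^2 - 1/4) * (a^2 * u^2 - 1/4)^2)"
    using cleared unfolding Y [symmetric] T [symmetric] G [symmetric] D [symmetric] W [symmetric]
      Q [symmetric] L [symmetric] E [symmetric] u .
  then show "2 * (1/2 - a * u) * (1/2 - a * u - 1) * (1/2 - a * u - (1/2 - b * u))
      * (1/2 - b * u)^2 * (1/2 - b * u - 1)^2 * (e * u)
    = (1/2 - b * u)^2 * (1/2 - b * u - 1)^2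
        * ((1/2 - a * u - 1) * (1/2 - a * u - (1/2 - b * u))
           + (1/2 - a * u) * (1/2 - a * u - (1/2 - b * u)) + (1/2 - a * u) * (1/2 - a * u - 1)) * c^2
      - 2 * (1/2 - a * u) * (1/2 - a * u - 1) * (1/2 - b * u) * (1/2 - b * u - 1)
        * ((2 * (1/2 - b * u) - 1) * (1/2 - a * u - (1/2 - b * u))
           + (1/2 - b * u) * (1/2 - b * u - 1)) * c
      + 2 * (\<alpha> * (1/2 - a * u)^2 * (1/2 - a * u - 1)^2 * (1/2 - a * u - (1/2 - b * u))^2
             + - \<gamma> * (1/2 - b * u) * (1/2 - a * u - 1)^2 * (1/2 - a * u - (1/2 - b * u))^2
             + \<gamma> * (1/2 - b * u - 1) * (1/2 - a * u)^2 * (1/2 - a * u - (1/2 - b * u))^2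
             + \<delta> * (1/2 - b * u) * (1/2 - b * u - 1) * (1/2 - a * u)^2 * (1/2 - a * u - 1)^2)"
    by algebra
qed

lemma PVI_params_Pi: "PVI_params (4/7) (4/7) (4/7) (1/3) = (2/9, - (8/49), 8/49, 33/98)"
  by (simp add: PVI_params_def power2_eq_square)

lemma double_cover_derivative_relation:
  fixes S U p :: "complex \<Rightarrow> complex"
  assumes "open A" "\<sigma> \<in> A" and cover: "\<And>x. x \<in> A \<Longrightarrow> U x ^ 2 = p (S x)"
    and S: "(S has_field_derivative S') (at \<sigma>)"
    and U: "(U has_field_derivative U') (at \<sigma>)"
    and p: "(p has_field_derivative p') (at (S \<sigma>))"
  shows "2 * U \<sigma> * U' = p' * S'"
proof (rule DERIV_unique)
  show "((\<lambda>x. U x ^ 2) has_field_derivative 2 * U \<sigma> * U') (at \<sigma>)"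
    using DERIV_power[OF U, of 2] by (simp add: algebra_simps)
  show "((\<lambda>x. U x ^ 2) has_field_derivative p' * S') (at \<sigma>)"
    by (rule has_field_derivative_transform_within_open[OF DERIV_chain2[OF p S] assms(1,2)])
       (simp add: cover)
qed

lemma has_field_derivative_on_double_cover:
  fixes S U p F :: "complex \<Rightarrow> complex"
  assumes "open A" "\<sigma> \<in> A" and cover: "\<And>x. x \<in> A \<Longrightarrow> U x ^ 2 = p (S x)"
    and S: "(S has_field_derivative S') (at \<sigma>)"
    and U: "(U has_field_derivative U') (at \<sigma>)"
    and p: "(p has_field_derivative p') (at (S \<sigma>))"
    and F: "(F has_field_derivative F') (at (S \<sigma>))"
    and "U \<sigma> \<noteq> 0"
  shows "((\<lambda>x. F (S x) * U x) has_field_derivative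
           S' * U \<sigma> * (F' + F (S \<sigma>) * p' / (2 * p (S \<sigma>)))) (at \<sigma>)"
proof -
  have U': "U' = p' * S' / (2 * U \<sigma>)"
    using double_cover_derivative_relation[OF assms(1-6)] \<open>U \<sigma> \<noteq> 0\<close>
    by (simp add: field_simps)
  have "((\<lambda>x. F (S x) * U x) has_field_derivative F' * S' * U \<sigma> + F (S \<sigma>) * U') (at \<sigma>)"
    using DERIV_mult[OF DERIV_chain2[OF F S] U] by (simp add: algebra_simps)
  moreover have "F' * S' * U \<sigma> + F (S \<sigma>) * U'
      = S' * U \<sigma> * (F' + F (S \<sigma>) * p' / (2 * p (S \<sigma>)))"
    using \<open>U \<sigma> \<noteq> 0\<close> unfolding U' cover[OF assms(2), symmetric]
    by (simp add: field_simps power2_eq_square)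
  ultimately show ?thesis by simp
qed

lemma eventually_nhds_neq_isCont:
  fixes f :: "'a::t2_space \<Rightarrow> 'b::t2_space"
  assumes "isCont f x" "f x \<noteq> c"
  shows "eventually (\<lambda>y. f y \<noteq> c) (nhds x)"
  using assms by (simp add: isCont_def tendsto_at_iff_tendsto_nhds tendsto_imp_eventually_ne)

(* Factors of the numerators and denominators below, named by degree.  They are kept as
   constants because field_simps distributes numerals over sums, after which it no longer
   recognises the denominators known to be nonzero. *)
definition F1a :: "complex \<Rightarrow> complex" where
  "F1a s = s + 1"

definition F1b :: "complex \<Rightarrow> complex" where
  "F1b s = s - 1"

definition F1c :: "complex \<Rightarrow> complex" where
  "F1c s = s - 7"

definition F2a :: "complex \<Rightarrow> complex" where
  "F2a s = s^2 + s + 7"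

definition F2b :: "complex \<Rightarrow> complex" where
  "F2b s = s^2 + s + 16"

definition F2c :: "complex \<Rightarrow> complex" where
  "F2c s = s^2 + 4 * s + 7"

definition F6a :: "complex \<Rightarrow> complex" where
  "F6a s = 5 * s^6 + 63 * s^5 + 252 * s^4 + 854 * s^3 + 1449 * s^2 + 1827 * s + 2030"

definition F6b :: "complex \<Rightarrow> complex" where
  "F6b s = 5 * s^6 + 36 * s^5 + 123 * s^4 + 452 * s^3 + 792 * s^2 + 1218 * s + 290"

definition F10 :: "complex \<Rightarrow> complex" where
  "F10 s = 10 * s^10 + 119 * s^9 + 633 * s^8 + 2852 * s^7 + 9877 * s^6 + 34746 * s^5
      + 97247 * s^4 + 207340 * s^3 + 351045 * s^2 + 337183 * s + 218660"

definition F12 :: "complex \<Rightarrow> complex" where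
  "F12 s = s^12 + 10 * s^11 + 85 * s^10 + 544 * s^9 + 3298 * s^8 + 17148 * s^7 + 67874 * s^6
      + 202120 * s^5 + 473805 * s^4 + 795466 * s^3 + 1021641 * s^2 + 814088 * s + 336400"

definition F15a :: "complex \<Rightarrow> complex" where
  "F15a s = 10 * s^15 + 165 * s^14 + 1677 * s^13 + 12750 * s^12 + 78411 * s^11
      + 399285 * s^10 + 1668710 * s^9 + 5783148 * s^8 + 16675416 * s^7 + 39475847 * s^6
      + 76841457 * s^5 + 118565142 * s^4 + 142387827 * s^3 + 121903791 * s^2 + 66201084 * s
      + 14667040"

definition F15b :: "complex \<Rightarrow> complex" where
  "F15b s = 5 * s^15 + 9 * s^14 - 66 * s^13 - 1426 * s^12 - 11115 * s^11 - 64977 * s^10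
      - 320326 * s^9 - 1271700 * s^8 - 4014729 * s^7 - 10516721 * s^6 - 20759310 * s^5
      - 32598618 * s^4 - 34491569 * s^3 - 24359463 * s^2 - 7411530 * s - 227360"

definition F16 :: "complex \<Rightarrow> complex" where
  "F16 s = 25 * s^16 + 506 * s^15 + 3951 * s^14 + 25380 * s^13 + 114243 * s^12
      + 475212 * s^11 + 1878341 * s^10 + 7284658 * s^9 + 25343055 * s^8 + 78706274 * s^7
      + 197182993 * s^6 + 418858776 * s^5 + 686239869 * s^4 + 879206328 * s^3
      + 787740891 * s^2 + 408096178 * s + 136813880"

definition F30 :: "complex \<Rightarrow> complex" where
  "F30 s = 125 * s^30 + 4485 * s^29 + 74235 * s^28 + 908225 * s^27 + 8796591 * s^26
      + 73215333 * s^25 + 544875195 * s^24 + 3714676761 * s^23 + 23202803442 * s^22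
      + 132133227264 * s^21 + 681720648504 * s^20 + 3174204639264 * s^19
      + 13322269988058 * s^18 + 50368848531066 * s^17 + 171561045347046 * s^16
      + 526056780799938 * s^15 + 1450741707902865 * s^14 + 3591350935413717 * s^13
      + 7961482260597243 * s^12 + 15754461949089969 * s^11 + 27724206499035963 * s^10
      + 43188494493273297 * s^9 + 59248512678383343 * s^8 + 71066948502314709 * s^7
      + 73799315806344240 * s^6 + 65162770073047542 * s^5 + 47365505584420674 * s^4
      + 26713418530523326 * s^3 + 10537846612639500 * s^2 + 2471682800052480 * s + 217742026297600"

definition Pi_generic :: "complex \<Rightarrow> bool" where
  "Pi_generic s \<longleftrightarrow> s \<noteq> 0 \<and> F1a s \<noteq> 0 \<and> F2a s \<noteq> 0 \<and> F6a s \<noteq> 0"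

definition Pi_cubic :: "complex \<Rightarrow> complex" where
  "Pi_cubic s = s * F2a s"

definition t_num :: "complex \<Rightarrow> complex" where
  "t_num s = s^9 - 84 * s^6 - 378 * s^5 - 1512 * s^4 - 5208 * s^3 - 7236 * s^2 - 8127 * s - 784"

definition t_den :: "complex \<Rightarrow> complex" where
  "t_den s = 432 * s * F1a s ^ 2 * F2a s ^ 2"

definition y_num :: "complex \<Rightarrow> complex" where
  "y_num s = s^10 + 5 * s^9 + 24 * s^8 + 20 * s^7 - 266 * s^6 - 2874 * s^5 - 14812 * s^4
      - 40316 * s^3 - 85359 * s^2 - 100067 * s - 67396"

definition y_den :: "complex \<Rightarrow> complex" where
  "y_den s = 16 * F1a s * F2a s * F6a s"

definition t_num' :: "complex \<Rightarrow> complex" where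
  "t_num' s = 9 * s^8 - 504 * s^5 - 1890 * s^4 - 6048 * s^3 - 15624 * s^2 - 14472 * s - 8127"

definition t_den' :: "complex \<Rightarrow> complex" where
  "t_den' s = 3024 * s^6 + 10368 * s^5 + 43200 * s^4 + 79488 * s^3 + 119232 * s^2
      + 96768 * s + 21168"

definition y_num' :: "complex \<Rightarrow> complex" where
  "y_num' s = 10 * s^9 + 45 * s^8 + 192 * s^7 + 140 * s^6 - 1596 * s^5 - 14370 * s^4
      - 59248 * s^3 - 120948 * s^2 - 170718 * s - 100067"

definition y_den' :: "complex \<Rightarrow> complex" where
  "y_den' s = 720 * s^8 + 9344 * s^7 + 46816 * s^6 + 182112 * s^5 + 449120 * s^4
      + 852544 * s^3 + 1116192 * s^2 + 922208 * s + 464464"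

definition y1_num :: "complex \<Rightarrow> complex" where
  "y1_num s = 675 * s^20 + 15012 * s^19 + 139401 * s^18 + 1012635 * s^17 + 5404131 * s^16
      + 25228665 * s^15 + 105849963 * s^14 + 422353899 * s^13 + 1573170741 * s^12
      + 5422086945 * s^11 + 16424979849 * s^10 + 43747461153 * s^9 + 98613862641 * s^8
      + 188536605075 * s^7 + 296138266137 * s^6 + 373164507009 * s^5 + 362053196820 * s^4
      + 244419752367 * s^3 + 106681975722 * s^2 + 25857823320 * s"

definition y1_den :: "complex \<Rightarrow> complex" where
  "y1_den s = 175 * s^21 + 4410 * s^20 + 47523 * s^19 + 330764 * s^18 + 1735272 * s^17
      + 6617016 * s^16 + 19645500 * s^15 + 40211136 * s^14 + 51960258 * s^13
      - 5036612 * s^12 - 164252214 * s^11 - 380185512 * s^10 - 340801468 * s^9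
      + 111537720 * s^8 + 764621676 * s^7 + 1842354528 * s^6 - 717045273 * s^5
      - 753900966 * s^4 - 852567317 * s^3 - 4684917636 * s^2 + 8290426620 * s - 3230785600"

definition y1_num' :: "complex \<Rightarrow> complex" where
  "y1_num' s = 13500 * s^19 + 285228 * s^18 + 2509218 * s^17 + 17214795 * s^16
      + 86466096 * s^15 + 378429975 * s^14 + 1481899482 * s^13 + 5490600687 * s^12
      + 18878048892 * s^11 + 59642956395 * s^10 + 164249798490 * s^9 + 393727150377 * s^8
      + 788910901128 * s^7 + 1319756235525 * s^6 + 1776829596822 * s^5 + 1865822535045 * s^4
      + 1448212787280 * s^3 + 733259257101 * s^2 + 213363951444 * s + 25857823320"

definition y1_den' :: "complex \<Rightarrow> complex" where
  "y1_den' s = 3675 * s^20 + 88200 * s^19 + 902937 * s^18 + 5953752 * s^17 + 29499624 * s^16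
      + 105872256 * s^15 + 294682500 * s^14 + 562955904 * s^13 + 675483354 * s^12
      - 60439344 * s^11 - 1806774354 * s^10 - 3801855120 * s^9 - 3067213212 * s^8
      + 892301760 * s^7 + 5352351732 * s^6 + 11054127168 * s^5 - 3585226365 * s^4
      - 3015603864 * s^3 - 2557701951 * s^2 - 9369835272 * s + 8290426620"

definition t_coeff :: "complex \<Rightarrow> complex" where
  "t_coeff s = t_num s / t_den s"

definition y_coeff :: "complex \<Rightarrow> complex" where
  "y_coeff s = y_num s / y_den s"

definition t_coeff' :: "complex \<Rightarrow> complex" where
  "t_coeff' s = (t_num' s * t_den s - t_num s * t_den' s) / t_den s ^ 2"

definition y_coeff' :: "complex \<Rightarrow> complex" where
  "y_coeff' s = (y_num' s * y_den s - y_num s * y_den' s) / y_den s ^ 2"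

(* For t = 1/2 - t_coeff s * u and y = 1/2 - y_coeff s * u on the curve u^2 = Pi_cubic s:
   t_slope_Pi and y_slope_Pi are dt/ds and dy/ds divided by u; y1_Pi = dy/dt, and y1_Pi' is
   its derivative in s; t_tm1_Pi, y_ym1_Pi, ymt_sq_Pi are t(t-1), y(y-1), (y-t)^2, and
   ymt_Pi = (y-t)/u; gamma_Pi = (t-1)y^2 - t(y-1)^2; y1sq_Pi and y1lin_Pi are the brackets
   at y1^2 and y1 in PVI_eq_if_cleared. *)
definition t_slope_Pi :: "complex \<Rightarrow> complex" where
  "t_slope_Pi s = - 7/864 * F1b s ^ 6 * F2b s * F2c s ^ 2 / (s^2 * F1a s ^ 3 * F2a s ^ 3)"

definition y_slope_Pi :: "complex \<Rightarrow> complex" where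
  "y_slope_Pi s = - 1/32 * F1b s * F2c s * F16 s / (s * F1a s ^ 2 * F2a s ^ 2 * F6a s ^ 2)"

definition y1_Pi :: "complex \<Rightarrow> complex" where
  "y1_Pi s = 27/7 * s * F1a s * F2a s * F16 s / (F1b s ^ 5 * F2b s * F2c s * F6a s ^ 2)"

definition y1_Pi' :: "complex \<Rightarrow> complex" where
  "y1_Pi' s = - 27/7 * F30 s / (F1b s ^ 6 * F2b s ^ 2 * F2c s ^ 2 * F6a s ^ 3)"

definition t_tm1_Pi :: "complex \<Rightarrow> complex" where
  "t_tm1_Pi s = 1/186624 * F1b s ^ 7 * F1c s * F2b s ^ 2 * F2c s ^ 3
                  / (s * F1a s ^ 4 * F2a s ^ 3)"

definition y_ym1_Pi :: "complex \<Rightarrow> complex" where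
  "y_ym1_Pi s = 1/256 * F1b s ^ 2 * F1c s * F2b s * F2c s ^ 2 * F12 s
                  / (F1a s ^ 2 * F2a s * F6a s ^ 2)"

definition ymt_Pi :: "complex \<Rightarrow> complex" where
  "ymt_Pi s = 1/432 * F1b s ^ 2 * F1c s * F2b s * F2c s ^ 2 * F6b s
                / (s * F1a s ^ 2 * F2a s ^ 2 * F6a s)"

definition ymt_sq_Pi :: "complex \<Rightarrow> complex" where
  "ymt_sq_Pi s = 1/186624 * F1b s ^ 4 * F1c s ^ 2 * F2b s ^ 2 * F2c s ^ 4 * F6b s ^ 2
                   / (s * F1a s ^ 4 * F2a s ^ 3 * F6a s ^ 2)"

definition gamma_Pi :: "complex \<Rightarrow> complex" where
  "gamma_Pi s = 1/6912 * F1b s ^ 4 * F1c s * F2b s ^ 2 * F2c s ^ 3 * F10 s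
                  / (F1a s ^ 3 * F2a s ^ 2 * F6a s ^ 2)"

definition y1sq_Pi :: "complex \<Rightarrow> complex" where
  "y1sq_Pi s = - 1/6912 * F1b s ^ 2 * F1c s ^ 2 * F2b s * F2c s ^ 2 * F15a s
                 / (F1a s ^ 3 * F2a s ^ 2 * F6a s ^ 2)"

definition y1lin_Pi :: "complex \<Rightarrow> complex" where
  "y1lin_Pi s = - 1/186624 * F1b s ^ 2 * F1c s * F2b s * F2c s ^ 2 * F15b s
                  / (s * F1a s ^ 4 * F2a s ^ 3 * F6a s)"

lemmas Pi_factor_defs = F1a_def F1b_def F1c_def F2a_def F2b_def F2c_def
  F6a_def F6b_def F10_def F12_def F15a_def F15b_def F16_def F30_def

lemmas Pi_polynomial_defs = Pi_cubic_def t_num_def t_den_def y_num_def y_den_def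
  t_num'_def t_den'_def y_num'_def y_den'_def y1_num_def y1_den_def y1_num'_def y1_den'_def
  Pi_factor_defs

lemma t_Pi_eq: "t_Pi s u = 1/2 - t_coeff s * u"
  by (simp add: t_Pi_def t_coeff_def t_num_def t_den_def F1a_def F2a_def)

lemma y_Pi_eq: "y_Pi s u = 1/2 - y_coeff s * u"
  by (simp add: y_Pi_def y_coeff_def y_num_def y_den_def F1a_def F2a_def F6a_def)

lemma on_Pi_iff: "on_Pi s u \<longleftrightarrow> u^2 = Pi_cubic s"
  by (simp add: on_Pi_def Pi_cubic_def F2a_def)

lemma Pi_generic_iff:
  "Pi_generic s \<longleftrightarrow> s \<noteq> 0 \<and> s + 1 \<noteq> 0 \<and> s^2 + s + 7 \<noteq> 0
     \<and> 5 * s^6 + 63 * s^5 + 252 * s^4 + 854 * s^3 + 1449 * s^2 + 1827 * s + 2030 \<noteq> 0"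
  by (simp add: Pi_generic_def F1a_def F2a_def F6a_def)

lemma Pi_generic_nonzero:
  assumes "Pi_generic s"
  shows "s \<noteq> 0" "F1a s \<noteq> 0" "F2a s \<noteq> 0" "F6a s \<noteq> 0"
    and "Pi_cubic s \<noteq> 0" "t_den s \<noteq> 0" "y_den s \<noteq> 0"
  using assms by (simp_all add: Pi_generic_def Pi_cubic_def t_den_def y_den_def)

lemma t_slope_Pi_nonzero_iff:
  "Pi_generic s \<Longrightarrow> t_slope_Pi s \<noteq> 0 \<longleftrightarrow> F1b s \<noteq> 0 \<and> F2b s \<noteq> 0 \<and> F2c s \<noteq> 0"
  by (auto simp: t_slope_Pi_def Pi_generic_def)

lemma
  shows has_field_derivative_Pi_cubic:
      "(Pi_cubic has_field_derivative 3 * s^2 + 2 * s + 7) (at s)"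
    and has_field_derivative_t_num: "(t_num has_field_derivative t_num' s) (at s)"
    and has_field_derivative_t_den: "(t_den has_field_derivative t_den' s) (at s)"
    and has_field_derivative_y_num: "(y_num has_field_derivative y_num' s) (at s)"
    and has_field_derivative_y_den: "(y_den has_field_derivative y_den' s) (at s)"
    and has_field_derivative_y1_num: "(y1_num has_field_derivative y1_num' s) (at s)"
    and has_field_derivative_y1_den: "(y1_den has_field_derivative y1_den' s) (at s)"
  unfolding Pi_cubic_def[abs_def] t_num_def[abs_def] t_den_def[abs_def] y_num_def[abs_def]
    y_den_def[abs_def] y1_num_def[abs_def] y1_den_def[abs_def] t_num'_def t_den'_def
    y_num'_def y_den'_def y1_num'_def y1_den'_def F1a_def F2a_def F6a_def
  by ((rule derivative_eq_intros refl | simp)+, algebra?)+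

lemma has_field_derivative_t_coeff:
  "Pi_generic s \<Longrightarrow> (t_coeff has_field_derivative t_coeff' s) (at s)"
  unfolding t_coeff_def[abs_def] t_coeff'_def power2_eq_square
  by (intro DERIV_divide has_field_derivative_t_num has_field_derivative_t_den Pi_generic_nonzero)

lemma has_field_derivative_y_coeff:
  "Pi_generic s \<Longrightarrow> (y_coeff has_field_derivative y_coeff' s) (at s)"
  unfolding y_coeff_def[abs_def] y_coeff'_def power2_eq_square
  by (intro DERIV_divide has_field_derivative_y_num has_field_derivative_y_den Pi_generic_nonzero)

(* Here and below the nonvanishing facts are handed to field_simps only: as premises of the
   goal they would slow algebra down badly. *)
lemma Pi_slopes:
  assumes "Pi_generic s"
  shows "- (t_coeff' s + t_coeff s * (3 * s^2 + 2 * s + 7) / (2 * Pi_cubic s)) = t_slope_Pi s"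
    and "- (y_coeff' s + y_coeff s * (3 * s^2 + 2 * s + 7) / (2 * Pi_cubic s)) = y_slope_Pi s"
  unfolding t_coeff'_def y_coeff'_def t_coeff_def y_coeff_def t_slope_Pi_def y_slope_Pi_def
  by (simp add: field_simps Pi_generic_nonzero[OF assms],
      simp only: Pi_polynomial_defs, algebra)+

lemma Pi_even_parts:
  assumes "Pi_generic s"
  shows "y_coeff s ^ 2 * Pi_cubic s - 1/4 = y_ym1_Pi s"
    and "t_coeff s ^ 2 * Pi_cubic s - 1/4 = t_tm1_Pi s"
    and "t_coeff s - y_coeff s = ymt_Pi s"
    and "(t_coeff s - y_coeff s)^2 * Pi_cubic s = ymt_sq_Pi s"
    and "2 * y_coeff s * t_coeff s * Pi_cubic s - y_coeff s ^ 2 * Pi_cubic s - 1/4 = gamma_Pi s"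
    and "2 * y_coeff s * (y_coeff s - t_coeff s) * Pi_cubic s + y_ym1_Pi s = y1sq_Pi s"
    and "2 * t_coeff s * (y_coeff s - t_coeff s) * Pi_cubic s + t_tm1_Pi s = y1lin_Pi s"
  unfolding t_coeff_def y_coeff_def y_ym1_Pi_def t_tm1_Pi_def ymt_Pi_def ymt_sq_Pi_def
    gamma_Pi_def y1sq_Pi_def y1lin_Pi_def
  by (simp add: field_simps Pi_generic_nonzero[OF assms],
      simp only: Pi_polynomial_defs, algebra)+

lemma y1_Pi_eq_slope_ratio:
  assumes "Pi_generic s" "t_slope_Pi s \<noteq> 0"
  shows "y_slope_Pi s / t_slope_Pi s = y1_Pi s"
  using assms unfolding t_slope_Pi_nonzero_iff[OF assms(1)]
  by (simp add: y_slope_Pi_def t_slope_Pi_def y1_Pi_def Pi_generic_def field_simps,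
      (intro disjI2)?, algebra)

lemma y1_num_eq: "y1_num s = 27 * s * F1a s * F2a s * F16 s"
  unfolding y1_num_def Pi_factor_defs by algebra

lemma y1_den_eq: "y1_den s = 7 * F1b s ^ 5 * F2b s * F2c s * F6a s ^ 2"
  unfolding y1_den_def Pi_factor_defs by algebra

lemma y1_Pi_eq_quotient: "y1_Pi = (\<lambda>s. y1_num s / y1_den s)"
  by (simp add: fun_eq_iff y1_Pi_def y1_num_eq y1_den_eq)

lemma y1_num_den_wronskian:
  "y1_num' s * y1_den s - y1_num s * y1_den' s = - 189 * F1b s ^ 4 * F6a s * F30 s"
  unfolding Pi_polynomial_defs by algebra

lemma has_field_derivative_y1_Pi:
  assumes "Pi_generic s" "t_slope_Pi s \<noteq> 0"
  shows "(y1_Pi has_field_derivative y1_Pi' s) (at s)"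
proof -
  have nz: "F1b s \<noteq> 0" "F2b s \<noteq> 0" "F2c s \<noteq> 0" "F6a s \<noteq> 0"
    using assms unfolding t_slope_Pi_nonzero_iff[OF assms(1)] by (simp_all add: Pi_generic_def)
  then have "y1_den s \<noteq> 0" by (simp add: y1_den_eq)
  moreover have "(y1_num' s * y1_den s - y1_num s * y1_den' s) / (y1_den s * y1_den s) = y1_Pi' s"
    unfolding y1_num_den_wronskian unfolding y1_den_eq y1_Pi'_def
    by (simp add: field_simps nz, (intro disjI2)?, algebra)
  ultimately show ?thesis
    unfolding y1_Pi_eq_quotient
    using DERIV_divide[OF has_field_derivative_y1_num has_field_derivative_y1_den] by metis
qed

lemma PVI_certificate_terms:
  fixes s :: complex
  defines "K \<equiv> F1b s ^ 6 * F1c s ^ 3 * F2b s ^ 3 * F2c s ^ 6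
                 / (s * F1a s ^ 9 * F2a s ^ 6 * F6a s ^ 6)"
  assumes nz: "s \<noteq> 0" "F1a s \<noteq> 0" "F2a s \<noteq> 0" "F6a s \<noteq> 0"
    "F1b s \<noteq> 0" "F2b s \<noteq> 0" "F2c s \<noteq> 0"
  shows "2 * y_ym1_Pi s * ymt_Pi s * t_tm1_Pi s ^ 2 * (y1_Pi' s / t_slope_Pi s)
      = 1/4045267795968 * F1c s * F6b s * F12 s * F30 s * K"
    and "t_tm1_Pi s ^ 2 * y1sq_Pi s * y1_Pi s ^ 2
      = - 1/16181071183872 * s * F1c s * F15a s * F16 s ^ 2 * K"
    and "2 * y_ym1_Pi s * t_tm1_Pi s * y1lin_Pi s * y1_Pi s
      = - 1/1155790798848 * F6a s * F12 s * F15b s * F16 s * K"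
    and "2/9 * y_ym1_Pi s ^ 2 * ymt_sq_Pi s
      = 1/55037657088 * F1a s * F1b s ^ 2 * F1c s * F2a s * F2b s * F2c s ^ 2 * F6b s ^ 2
          * F12 s ^ 2 * K"
    and "8/49 * gamma_Pi s * ymt_sq_Pi s
      = 1/7900913664 * F1a s ^ 2 * F1b s ^ 2 * F2a s * F2b s * F2c s * F6a s ^ 2 * F6b s ^ 2
          * F10 s * K"
    and "33/98 * t_tm1_Pi s * y_ym1_Pi s ^ 2
      = 11/399532621824 * F1a s * F1b s ^ 5 * F2a s * F2b s * F2c s * F6a s ^ 2 * F12 s ^ 2
          * K"
  unfolding K_def y_ym1_Pi_def ymt_Pi_def t_tm1_Pi_def y1_Pi'_def t_slope_Pi_def y1sq_Pi_def
    y1_Pi_def y1lin_Pi_def ymt_sq_Pi_def gamma_Pi_def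
  by (simp add: field_simps nz, (intro disjI2)?, algebra)+

(* The factor F1b^6 F1c^3 F2b^3 F2c^6 common to all terms (it sits in K above) has been
   split off; this lowers the degree of the identity from 76 to 49. *)
lemma PVI_certificate_polynomial:
  "1/4045267795968 * F1c s * F6b s * F12 s * F30 s
    = - 1/16181071183872 * s * F1c s * F15a s * F16 s ^ 2
      - - 1/1155790798848 * F6a s * F12 s * F15b s * F16 s
      + 2 * (1/55037657088 * F1a s * F1b s ^ 2 * F1c s * F2a s * F2b s * F2c s ^ 2
               * F6b s ^ 2 * F12 s ^ 2
             + 1/7900913664 * F1a s ^ 2 * F1b s ^ 2 * F2a s * F2b s * F2c s * F6a s ^ 2
               * F6b s ^ 2 * F10 s
             + 11/399532621824 * F1a s * F1b s ^ 5 * F2a s * F2b s * F2c s * F6a s ^ 2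
               * F12 s ^ 2)"
  unfolding Pi_factor_defs by algebra

lemma PVI_certificate:
  assumes "Pi_generic s" "t_slope_Pi s \<noteq> 0"
  shows "2 * y_ym1_Pi s * ymt_Pi s * t_tm1_Pi s ^ 2 * (y1_Pi' s / t_slope_Pi s)
    = t_tm1_Pi s ^ 2 * y1sq_Pi s * y1_Pi s ^ 2
      - 2 * y_ym1_Pi s * t_tm1_Pi s * y1lin_Pi s * y1_Pi s
      + 2 * (2/9 * y_ym1_Pi s ^ 2 * ymt_sq_Pi s + 8/49 * gamma_Pi s * ymt_sq_Pi s
             + 33/98 * t_tm1_Pi s * y_ym1_Pi s ^ 2)"
proof -
  have "s \<noteq> 0" "F1a s \<noteq> 0" "F2a s \<noteq> 0" "F6a s \<noteq> 0" "F1b s \<noteq> 0" "F2b s \<noteq> 0" "F2c s \<noteq> 0"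
    using assms unfolding t_slope_Pi_nonzero_iff[OF assms(1)] by (simp_all add: Pi_generic_def)
  note terms = PVI_certificate_terms[OF this]
  show ?thesis
    unfolding terms PVI_certificate_polynomial by algebra
qed

locale Pi_parametrisation =
  fixes S U :: "complex \<Rightarrow> complex" and A :: "complex set"
  assumes open_A: "open A"
    and S_holomorphic: "S holomorphic_on A" and U_holomorphic: "U holomorphic_on A"
    and on_Pi: "\<forall>\<sigma>\<in>A. on_Pi (S \<sigma>) (U \<sigma>)"
begin

lemma U_squared: "\<sigma> \<in> A \<Longrightarrow> U \<sigma> ^ 2 = Pi_cubic (S \<sigma>)"
  using on_Pi by (simp add: on_Pi_iff)

lemma U_nonzero: "\<sigma> \<in> A \<Longrightarrow> Pi_generic (S \<sigma>) \<Longrightarrow> U \<sigma> \<noteq> 0"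
  using U_squared Pi_generic_nonzero(5) by force

lemma has_field_derivative_S: "\<sigma> \<in> A \<Longrightarrow> (S has_field_derivative deriv S \<sigma>) (at \<sigma>)"
  using holomorphic_derivI[OF S_holomorphic open_A] .

lemma has_field_derivative_U: "\<sigma> \<in> A \<Longrightarrow> (U has_field_derivative deriv U \<sigma>) (at \<sigma>)"
  using holomorphic_derivI[OF U_holomorphic open_A] .

lemma deriv_half_minus_times_U:
  assumes "\<sigma> \<in> A" "Pi_generic (S \<sigma>)" "(F has_field_derivative F') (at (S \<sigma>))"
  shows "deriv (\<lambda>x. 1/2 - F (S x) * U x) \<sigma>
    = deriv S \<sigma> * U \<sigma>
      * - (F' + F (S \<sigma>) * (3 * S \<sigma> ^ 2 + 2 * S \<sigma> + 7) / (2 * Pi_cubic (S \<sigma>)))"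
proof -
  have "((\<lambda>x. F (S x) * U x) has_field_derivative deriv S \<sigma> * U \<sigma>
      * (F' + F (S \<sigma>) * (3 * S \<sigma> ^ 2 + 2 * S \<sigma> + 7) / (2 * Pi_cubic (S \<sigma>)))) (at \<sigma>)"
    by (rule has_field_derivative_on_double_cover[OF open_A assms(1) U_squared
          has_field_derivative_S[OF assms(1)] has_field_derivative_U[OF assms(1)]
          has_field_derivative_Pi_cubic assms(3) U_nonzero[OF assms(1,2)]])
  from DERIV_diff[OF DERIV_const[of "1/2"] this] show ?thesis
    by (simp add: DERIV_imp_deriv algebra_simps)
qed

lemma deriv_t_Pi:
  assumes "\<sigma> \<in> A" "Pi_generic (S \<sigma>)"
  shows "deriv (\<lambda>x. t_Pi (S x) (U x)) \<sigma> = deriv S \<sigma> * U \<sigma> * t_slope_Pi (S \<sigma>)"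
  unfolding t_Pi_eq deriv_half_minus_times_U[OF assms has_field_derivative_t_coeff[OF assms(2)]]
    Pi_slopes(1)[OF assms(2)] ..

lemma deriv_y_Pi:
  assumes "\<sigma> \<in> A" "Pi_generic (S \<sigma>)"
  shows "deriv (\<lambda>x. y_Pi (S x) (U x)) \<sigma> = deriv S \<sigma> * U \<sigma> * y_slope_Pi (S \<sigma>)"
  unfolding y_Pi_eq deriv_half_minus_times_U[OF assms has_field_derivative_y_coeff[OF assms(2)]]
    Pi_slopes(2)[OF assms(2)] ..

lemma eventually_y1_eq_y1_Pi:
  assumes \<tau>: "\<tau> \<in> A" and "Pi_generic (S \<tau>)" "t_slope_Pi (S \<tau>) \<noteq> 0" "deriv S \<tau> \<noteq> 0"
  shows "eventually (\<lambda>\<sigma>. deriv (\<lambda>x. y_Pi (S x) (U x)) \<sigma> / deriv (\<lambda>x. t_Pi (S x) (U x)) \<sigma>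
                          = y1_Pi (S \<sigma>)) (nhds \<tau>)"
proof -
  have S: "isCont S \<tau>"
    using holomorphic_on_imp_continuous_on[OF S_holomorphic] open_A \<tau>
    by (simp add: continuous_on_eq_continuous_at)
  have S': "isCont (deriv S) \<tau>"
    using holomorphic_on_imp_continuous_on[OF holomorphic_deriv[OF S_holomorphic open_A]] open_A \<tau>
    by (simp add: continuous_on_eq_continuous_at)
  have "eventually (\<lambda>\<sigma>. \<sigma> \<in> A \<and> S \<sigma> \<noteq> 0 \<and> F1a (S \<sigma>) \<noteq> 0 \<and> F2a (S \<sigma>) \<noteq> 0 \<and> F6a (S \<sigma>) \<noteq> 0
      \<and> F1b (S \<sigma>) \<noteq> 0 \<and> F2b (S \<sigma>) \<noteq> 0 \<and> F2c (S \<sigma>) \<noteq> 0 \<and> deriv S \<sigma> \<noteq> 0) (nhds \<tau>)"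
    using assms(2,3) unfolding t_slope_Pi_nonzero_iff[OF assms(2)] Pi_generic_def
    by (intro eventually_conj eventually_nhds_in_open[OF open_A \<tau>] eventually_nhds_neq_isCont
          S S' assms(4))
       (simp_all add: Pi_factor_defs, (intro continuous_intros S)+)
  then show ?thesis
  proof (rule eventually_mono)
    fix \<sigma> assume "\<sigma> \<in> A \<and> S \<sigma> \<noteq> 0 \<and> F1a (S \<sigma>) \<noteq> 0 \<and> F2a (S \<sigma>) \<noteq> 0 \<and> F6a (S \<sigma>) \<noteq> 0
      \<and> F1b (S \<sigma>) \<noteq> 0 \<and> F2b (S \<sigma>) \<noteq> 0 \<and> F2c (S \<sigma>) \<noteq> 0 \<and> deriv S \<sigma> \<noteq> 0"
    then have "\<sigma> \<in> A" "Pi_generic (S \<sigma>)" "t_slope_Pi (S \<sigma>) \<noteq> 0" "deriv S \<sigma> \<noteq> 0"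
      by (simp_all add: Pi_generic_def t_slope_Pi_nonzero_iff)
    then show "deriv (\<lambda>x. y_Pi (S x) (U x)) \<sigma> / deriv (\<lambda>x. t_Pi (S x) (U x)) \<sigma> = y1_Pi (S \<sigma>)"
      by (simp add: deriv_t_Pi deriv_y_Pi U_nonzero y1_Pi_eq_slope_ratio[symmetric])
  qed
qed

lemma PVI_solution:
  assumes \<tau>: "\<tau> \<in> A" and generic: "Pi_generic (S \<tau>)"
    and dT: "deriv (\<lambda>\<sigma>. t_Pi (S \<sigma>) (U \<sigma>)) \<tau> \<noteq> 0"
    and t: "t_Pi (S \<tau>) (U \<tau>) \<notin> {0, 1}"
    and y: "y_Pi (S \<tau>) (U \<tau>) \<notin> {0, 1, t_Pi (S \<tau>) (U \<tau>)}"
  shows "let T = (\<lambda>\<sigma>. t_Pi (S \<sigma>) (U \<sigma>));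
             Y = (\<lambda>\<sigma>. y_Pi (S \<sigma>) (U \<sigma>));
             Y1 = (\<lambda>\<sigma>. deriv Y \<sigma> / deriv T \<sigma>);
             Y2 = deriv Y1 \<tau> / deriv T \<tau>
         in PVI_eq (4/7) (4/7) (4/7) (1/3) (T \<tau>) (Y \<tau>) (Y1 \<tau>) Y2"
proof -
  define s u where "s = S \<tau>" and "u = U \<tau>"
  define Y1 where
    "Y1 = (\<lambda>\<sigma>. deriv (\<lambda>x. y_Pi (S x) (U x)) \<sigma> / deriv (\<lambda>x. t_Pi (S x) (U x)) \<sigma>)"
  have generic_s: "Pi_generic s" and u2: "u^2 = Pi_cubic s"
    using generic U_squared[OF \<tau>] by (simp_all add: s_def u_def)
  have dT_eq: "deriv (\<lambda>x. t_Pi (S x) (U x)) \<tau> = deriv S \<tau> * u * t_slope_Pi s"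
    using deriv_t_Pi[OF \<tau> generic] by (simp add: s_def u_def)
  then have S': "deriv S \<tau> \<noteq> 0" and slope: "t_slope_Pi s \<noteq> 0" and "u \<noteq> 0"
    using dT by auto
  have ev: "eventually (\<lambda>\<sigma>. Y1 \<sigma> = y1_Pi (S \<sigma>)) (nhds \<tau>)"
    using eventually_y1_eq_y1_Pi[OF \<tau> generic slope[unfolded s_def] S'] by (simp add: Y1_def)
  then have Y1: "Y1 \<tau> = y1_Pi s"
    unfolding s_def by (rule eventually_nhds_x_imp_x)
  have "deriv Y1 \<tau> = y1_Pi' s * deriv S \<tau>"
    unfolding deriv_cong_ev[OF ev refl] s_def
    by (rule DERIV_imp_deriv[OF DERIV_chain2[OF has_field_derivative_y1_Pi has_field_derivative_S]])
       (use generic slope \<tau> in \<open>simp_all add: s_def\<close>)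
  then have Y2: "deriv Y1 \<tau> / deriv (\<lambda>x. t_Pi (S x) (U x)) \<tau>
      = y1_Pi' s / (Pi_cubic s * t_slope_Pi s) * u"
    using S' \<open>u \<noteq> 0\<close> unfolding dT_eq u2[symmetric] by (simp add: field_simps power2_eq_square)
  have "PVI_eq (4/7) (4/7) (4/7) (1/3) (1/2 - t_coeff s * u) (1/2 - y_coeff s * u) (y1_Pi s)
      (y1_Pi' s / (Pi_cubic s * t_slope_Pi s) * u)"
  proof (rule PVI_eq_on_double_cover[OF PVI_params_Pi u2 _ _ Pi_even_parts[OF generic_s] _
        PVI_certificate[OF generic_s slope]])
    show "1/2 - y_coeff s * u \<notin> {0, 1, 1/2 - t_coeff s * u}" "1/2 - t_coeff s * u \<notin> {0, 1}"
      using t y by (simp_all add: t_Pi_eq y_Pi_eq s_def u_def)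
    show "y1_Pi' s / (Pi_cubic s * t_slope_Pi s) * Pi_cubic s = y1_Pi' s / t_slope_Pi s"
      using Pi_generic_nonzero(5)[OF generic_s] by simp
  qed
  then have "PVI_eq (4/7) (4/7) (4/7) (1/3) (t_Pi s u) (y_Pi s u) (Y1 \<tau>)
      (deriv Y1 \<tau> / deriv (\<lambda>x. t_Pi (S x) (U x)) \<tau>)"
    unfolding Y1 Y2 unfolding t_Pi_eq y_Pi_eq .
  then show ?thesis
    unfolding Let_def Y1_def s_def u_def .
qed

end

theorem mainTheorem15:
  fixes S U :: "complex \<Rightarrow> complex" and A :: "complex set" and \<tau> :: complex
  assumes "open A" and "\<tau> \<in> A"
    and "S holomorphic_on A" and "U holomorphic_on A"
    and "\<forall>\<sigma>\<in>A. on_Pi (S \<sigma>) (U \<sigma>)"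
    and "S \<tau> \<noteq> 0" and "S \<tau> + 1 \<noteq> 0" and "(S \<tau>)^2 + S \<tau> + 7 \<noteq> 0"
    and "5* (S \<tau>)^6 + 63* (S \<tau>)^5 + 252* (S \<tau>)^4 + 854* (S \<tau>)^3 + 1449* (S \<tau>)^2
           + 1827* (S \<tau>) + 2030 \<noteq> 0"
    and "deriv (\<lambda>\<sigma>. t_Pi (S \<sigma>) (U \<sigma>)) \<tau> \<noteq> 0"
    and "t_Pi (S \<tau>) (U \<tau>) \<notin> {0, 1}"
    and "y_Pi (S \<tau>) (U \<tau>) \<notin> {0, 1, t_Pi (S \<tau>) (U \<tau>)}"
  shows "let T = (\<lambda>\<sigma>. t_Pi (S \<sigma>) (U \<sigma>));
             Y = (\<lambda>\<sigma>. y_Pi (S \<sigma>) (U \<sigma>));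
             Y1 = (\<lambda>\<sigma>. deriv Y \<sigma> / deriv T \<sigma>);
             Y2 = deriv Y1 \<tau> / deriv T \<tau>
         in PVI_eq (4/7) (4/7) (4/7) (1/3) (T \<tau>) (Y \<tau>) (Y1 \<tau>) Y2"
proof -
  interpret Pi_parametrisation S U A
    using assms(1,3-5) by unfold_locales
  have "Pi_generic (S \<tau>)"
    using assms(6-9) by (simp add: Pi_generic_iff)
  then show ?thesis
    using PVI_solution assms(2,10-12) by blast
qed

end
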